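(* Let $\lambda$ be a partition, $\pi$ an $R_\lambda$-permutation, and $T\in\mathcal{T}_\lambda$ with $T\le Y_\lambda(\pi)$. Write $Y:=Y_\lambda(\pi)$. If there exists a box $(l,k)$ of $\lambda$ such that $Y_l(k)<m(U^{(l,k)})$, then $\pi$ is $R_\lambda$-312-containing.
   Context: Fix $n\ge1$; $[m]=\{1,\dots,m\}$. A partition is $\lambda=(\lambda_1\ge\cdots\ge\lambda_n\ge0)\in\mathbb{Z}^n$, with boxes $(j,i)$ (column $j$, row $i$), $1\le j\le\lambda_1$, $1\le i\le\zeta_j:=\#\{i:\lambda_i\ge j\}$; $R_\lambda:=\{\zeta_j:\zeta_j<n\}$ with elements $q_1<\dots<q_r$, $q_0:=0$, $q_{r+1}:=n$. An $R_\lambda$-permutation is a permutation $\pi$ of $[n]$ (one-line notation) strictly increasing on each index set $\{q_{h-1}+1,\dots,q_h\}$; it is $R_\lambda$-312-containing if there exist $h\in[r-1]$ and $1\le a\le q_h<b\le q_{h+1}<c\le n$ with $\pi_b<\pi_c<\pi_a$. A tableau of shape $\lambda$ fills the boxes with values in $[n]$, strictly increasing down columns and weakly increasing along rows; $\mathcal{T}_\lambda$ is their set, ordered entrywise. $T_j(i)$ is the entry at column $j$ row $i$. The $\lambda$-key $Y_\lambda(\pi)$ is the tableau whose column $j$ consists of $\{\pi_1,\dots,\pi_{\zeta_j}\}$ in increasing order. Scanning paths: the earliest weakly increasing subsequence (EWIS) of a sequence $x_1,x_2,\dots$ is $x_{i_1},x_{i_2},\dots$ with $i_1=1$ and $i_u$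 the smallest index $>i_{u-1}$ with $x_{i_u}\ge x_{i_{u-1}}$. For $T\in\mathcal{T}_\lambda$ and $l\in[\lambda_1]$: consider the boxes of $T$ in columns $l,\dots,\lambda_1$, initially unmarked; for $k=\zeta_l,\zeta_l-1,\dots,1$ in turn, form the sequence of the lowest unmarked entries of columns $l,l+1,\dots$ (left to right, over columns still having unmarked boxes), take its EWIS and mark the contributing boxes; this set of boxes is the scanning path $\mathcal{P}(T;l,k)$ (and the last term of the EWIS is the entry of the scanning tableau $S(T)$ at $(l,k)$). For a box $(l,k)$, $U^{(l,k)}$ is the collection of entries of $T$ in columns $l+1,\dots,\lambda_1$ at boxes not lying on any of the paths $\mathcal{P}(T;l,\zeta_l),\dots,\mathcal{P}(T;l,k+1)$; $m(U^{(l,k)})$ is the maximum of these entries, or $1$ if there are none. *)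

theory Defs
  imports "HOL-Combinatorics.Permutations"
begin

definition is_partition :: "nat \<Rightarrow> (nat \<Rightarrow> nat) \<Rightarrow> bool" where
  "is_partition n lam \<longleftrightarrow> (\<forall>i j. 1 \<le> i \<longrightarrow> i \<le> j \<longrightarrow> j \<le> n \<longrightarrow> lam j \<le> lam i)"

definition zeta :: "nat \<Rightarrow> (nat \<Rightarrow> nat) \<Rightarrow> nat \<Rightarrow> nat" where
  "zeta n lam j = card {i \<in> {1..n}. j \<le> lam i}"

(* box (j,i): column j, row i *)
definition is_box :: "nat \<Rightarrow> (nat \<Rightarrow> nat) \<Rightarrow> nat \<Rightarrow> nat \<Rightarrow> bool" where
  "is_box n lam j i \<longleftrightarrow> 1 \<le> j \<and> j \<le> lam 1 \<and> 1 \<le> i \<and> i \<le> zeta n lam j"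

definition Rset :: "nat \<Rightarrow> (nat \<Rightarrow> nat) \<Rightarrow> nat set" where
  "Rset n lam = {zeta n lam j | j. 1 \<le> j \<and> j \<le> lam 1 \<and> zeta n lam j < n}"

definition rR :: "nat \<Rightarrow> (nat \<Rightarrow> nat) \<Rightarrow> nat" where
  "rR n lam = card (Rset n lam)"

definition qseq :: "nat \<Rightarrow> (nat \<Rightarrow> nat) \<Rightarrow> nat \<Rightarrow> nat" where
  "qseq n lam h = (if h = 0 then 0
     else if h \<le> rR n lam then sorted_list_of_set (Rset n lam) ! (h - 1) else n)"

definition is_R_perm :: "nat \<Rightarrow> (nat \<Rightarrow> nat) \<Rightarrow> (nat \<Rightarrow> nat) \<Rightarrow> bool" where
  "is_R_perm n lam \<pi> \<longleftrightarrow> \<pi> permutes {1..n} \<and>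
     (\<forall>h \<in> {1..rR n lam + 1}. strict_mono_on {qseq n lam (h - 1) + 1 .. qseq n lam h} \<pi>)"

definition R_312_containing :: "nat \<Rightarrow> (nat \<Rightarrow> nat) \<Rightarrow> (nat \<Rightarrow> nat) \<Rightarrow> bool" where
  "R_312_containing n lam \<pi> \<longleftrightarrow>
     (\<exists>h a b c. 1 \<le> h \<and> h \<le> rR n lam - 1 \<and>
        1 \<le> a \<and> a \<le> qseq n lam h \<and> qseq n lam h < b \<and> b \<le> qseq n lam (h + 1) \<and>
        qseq n lam (h + 1) < c \<and> c \<le> n \<and> \<pi> b < \<pi> c \<and> \<pi> c < \<pi> a)"

(* tableaux: T j i is the entry at column j, row i *)
definition is_tableau :: "nat \<Rightarrow> (nat \<Rightarrow> nat) \<Rightarrow> (nat \<Rightarrow> nat \<Rightarrow> nat) \<Rightarrow> bool" where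
  "is_tableau n lam T \<longleftrightarrow>
     (\<forall>j i. is_box n lam j i \<longrightarrow> T j i \<in> {1..n}) \<and>
     (\<forall>j i. is_box n lam j i \<longrightarrow> is_box n lam j (i + 1) \<longrightarrow> T j i < T j (i + 1)) \<and>
     (\<forall>j i. is_box n lam j i \<longrightarrow> is_box n lam (j + 1) i \<longrightarrow> T j i \<le> T (j + 1) i)"

definition tab_le :: "nat \<Rightarrow> (nat \<Rightarrow> nat) \<Rightarrow> (nat \<Rightarrow> nat \<Rightarrow> nat) \<Rightarrow> (nat \<Rightarrow> nat \<Rightarrow> nat) \<Rightarrow> bool" where
  "tab_le n lam T S \<longleftrightarrow> (\<forall>j i. is_box n lam j i \<longrightarrow> T j i \<le> S j i)"

definition key :: "nat \<Rightarrow> (nat \<Rightarrow> nat) \<Rightarrow> (nat \<Rightarrow> nat) \<Rightarrow> nat \<Rightarrow> nat \<Rightarrow> nat" where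
  "key n lam \<pi> j i = sorted_list_of_set (\<pi> ` {1..zeta n lam j}) ! (i - 1)"

(* earliest weakly increasing subsequence, on a list of (tag, value) pairs, by value *)
fun ewis_from :: "nat \<Rightarrow> ('b \<times> nat) list \<Rightarrow> ('b \<times> nat) list" where
  "ewis_from v [] = []"
| "ewis_from v (y # ys) = (if v \<le> snd y then y # ewis_from (snd y) ys else ewis_from v ys)"

fun ewis :: "('b \<times> nat) list \<Rightarrow> ('b \<times> nat) list" where
  "ewis [] = []"
| "ewis (x # xs) = x # ewis_from (snd x) xs"

definition has_unmarked :: "nat \<Rightarrow> (nat \<Rightarrow> nat) \<Rightarrow> (nat \<times> nat) set \<Rightarrow> nat \<Rightarrow> bool" where
  "has_unmarked n lam M j \<longleftrightarrow> (\<exists>i. is_box n lam j i \<and> (j, i) \<notin> M)"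

definition lowest_unmarked :: "nat \<Rightarrow> (nat \<Rightarrow> nat) \<Rightarrow> (nat \<times> nat) set \<Rightarrow> nat \<Rightarrow> nat" where
  "lowest_unmarked n lam M j = Max {i. is_box n lam j i \<and> (j, i) \<notin> M}"

definition scan_seq :: "nat \<Rightarrow> (nat \<Rightarrow> nat) \<Rightarrow> (nat \<Rightarrow> nat \<Rightarrow> nat) \<Rightarrow> nat \<Rightarrow> (nat \<times> nat) set
    \<Rightarrow> ((nat \<times> nat) \<times> nat) list" where
  "scan_seq n lam T l M =
     map (\<lambda>j. ((j, lowest_unmarked n lam M j), T j (lowest_unmarked n lam M j)))
       (filter (has_unmarked n lam M) [l..<lam 1 + 1])"

definition scan_step :: "nat \<Rightarrow> (nat \<Rightarrow> nat) \<Rightarrow> (nat \<Rightarrow> nat \<Rightarrow> nat) \<Rightarrow> nat \<Rightarrow> (nat \<times> nat) set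
    \<Rightarrow> (nat \<times> nat) set" where
  "scan_step n lam T l M = fst ` set (ewis (scan_seq n lam T l M))"

(* set of marked boxes after t rounds (rounds k = zeta_l, zeta_l - 1, ...) *)
fun marked :: "nat \<Rightarrow> (nat \<Rightarrow> nat) \<Rightarrow> (nat \<Rightarrow> nat \<Rightarrow> nat) \<Rightarrow> nat \<Rightarrow> nat \<Rightarrow> (nat \<times> nat) set" where
  "marked n lam T l 0 = {}"
| "marked n lam T l (Suc t) = marked n lam T l t \<union> scan_step n lam T l (marked n lam T l t)"

definition scanning_path :: "nat \<Rightarrow> (nat \<Rightarrow> nat) \<Rightarrow> (nat \<Rightarrow> nat \<Rightarrow> nat) \<Rightarrow> nat \<Rightarrow> nat
    \<Rightarrow> (nat \<times> nat) set" where
  "scanning_path n lam T l k = scan_step n lam T l (marked n lam T l (zeta n lam l - k))"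

definition U_set :: "nat \<Rightarrow> (nat \<Rightarrow> nat) \<Rightarrow> (nat \<Rightarrow> nat \<Rightarrow> nat) \<Rightarrow> nat \<Rightarrow> nat \<Rightarrow> nat set" where
  "U_set n lam T l k = {T j i | j i. is_box n lam j i \<and> l + 1 \<le> j \<and>
       (j, i) \<notin> (\<Union>k' \<in> {k + 1 .. zeta n lam l}. scanning_path n lam T l k')}"

definition mU :: "nat \<Rightarrow> (nat \<Rightarrow> nat) \<Rightarrow> (nat \<Rightarrow> nat \<Rightarrow> nat) \<Rightarrow> nat \<Rightarrow> nat \<Rightarrow> nat" where
  "mU n lam T l k = (if U_set n lam T l k = {} then 1 else Max (U_set n lam T l k))"

end

theory Submission
  imports Defs
begin

(* Argue contrapositively: assume pi has no R_lambda-312 pattern and fix the column l.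
   After t rounds of scanning from column l, the unmarked boxes of each column j >= l are its top
   h_t(j) boxes, where h_t(l) = zeta_l - t and h_t is weakly decreasing in j (equal neighbouring
   heights are scanned together, rows being weakly increasing).  By induction on t, every unmarked
   entry in these columns is at most Y_l(zeta_l - t): one round makes the previous bound
   Y_l(k+1) strict, and an unmarked entry e of column j with Y_l(k) < e < Y_l(k+1) is not in
   column l of Y, lies below some a = Y_j(i) >= e, and lies above some b in column l but not in
   column j of Y; the positions of a, b, e under pi form an R_lambda-312 pattern.  For
   t = zeta_l - k the unmarked entries of columns > l are exactly U^(l,k), so m(U^(l,k)) <= Y_l(k). *)

lemma sorted_list_of_set_nth_le_iff:
  fixes S :: "'a::linorder set"
  assumes "finite S" "i < card S" "j < card S"
  shows "sorted_list_of_set S ! i \<le> sorted_list_of_set S ! j \<longleftrightarrow> i \<le> j"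
proof -
  have "sorted_wrt (<) (sorted_list_of_set S)" "length (sorted_list_of_set S) = card S"
    using assms(1) by simp_all
  then show ?thesis
    using assms(2,3) sorted_wrt_nth_less[of "(<)" "sorted_list_of_set S"]
    by (metis linorder_not_less nle_le order_less_imp_le)
qed

lemma sorted_list_of_set_nth_in:
  assumes "finite S" "i < card S"
  shows "sorted_list_of_set S ! i \<in> S"
  using assms by (metis nth_mem sorted_list_of_set.length_sorted_key_list_of_set
      sorted_list_of_set.set_sorted_key_list_of_set)

lemma sorted_list_of_set_obtain_index:
  assumes "finite S" "x \<in> S"
  obtains m where "m < card S" "x = sorted_list_of_set S ! m"
  using assms by (metis in_set_conv_nth sorted_list_of_set.length_sorted_key_list_of_set
      sorted_list_of_set.set_sorted_key_list_of_set)

lemma sorted_list_of_set_nth_Suc_le: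
  fixes S :: "'a::linorder set"
  assumes "finite S" "x \<in> S" "Suc k < card S" "sorted_list_of_set S ! k < x"
  shows "sorted_list_of_set S ! Suc k \<le> x"
proof -
  obtain m where m: "m < card S" "x = sorted_list_of_set S ! m"
    using sorted_list_of_set_obtain_index assms(1,2) by blast
  then have "k < m"
    using assms sorted_list_of_set_nth_le_iff[OF assms(1), of m k] by fastforce
  then show ?thesis
    using m assms sorted_list_of_set_nth_le_iff[OF assms(1), of "Suc k" m] by simp
qed

lemma le_sorted_list_of_set_last:
  fixes S :: "'a::linorder set"
  assumes "finite S" "x \<in> S"
  shows "x \<le> sorted_list_of_set S ! (card S - 1)"
proof -
  obtain m where "m < card S" "x = sorted_list_of_set S ! m"
    using sorted_list_of_set_obtain_index assms by blast
  then show ?thesis using sorted_list_of_set_nth_le_iff[OF assms(1), of m "card S - 1"] by simp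
qed

lemma sorted_list_of_set_atMost_nth:
  fixes S :: "'a::linorder set"
  assumes "finite S" "k < card S"
  shows "{x\<in>S. x \<le> sorted_list_of_set S ! k} = (!) (sorted_list_of_set S) ` {..k}"
proof (intro set_eqI iffI)
  fix x assume x: "x \<in> {x\<in>S. x \<le> sorted_list_of_set S ! k}"
  then obtain m where m: "m < card S" "x = sorted_list_of_set S ! m"
    using sorted_list_of_set_obtain_index assms(1) by blast
  then have "m \<le> k" using x sorted_list_of_set_nth_le_iff[OF assms(1) m(1) assms(2)] by simp
  then show "x \<in> (!) (sorted_list_of_set S) ` {..k}" using m by blast
next
  fix x assume "x \<in> (!) (sorted_list_of_set S) ` {..k}"
  then obtain m where m: "m \<le> k" "x = sorted_list_of_set S ! m" by blast
  then have "m < card S" using assms(2) by simp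
  then show "x \<in> {x\<in>S. x \<le> sorted_list_of_set S ! k}"
    using m sorted_list_of_set_nth_in[OF assms(1)] sorted_list_of_set_nth_le_iff[OF assms(1) _ assms(2)]
    by blast
qed

lemma card_atMost_sorted_list_of_set_nth:
  fixes S :: "'a::linorder set"
  assumes "finite S" "k < card S"
  shows "card {x\<in>S. x \<le> sorted_list_of_set S ! k} = Suc k"
proof -
  have "inj_on ((!) (sorted_list_of_set S)) {..k}"
    using assms by (intro inj_on_nth) auto
  then show ?thesis
    unfolding sorted_list_of_set_atMost_nth[OF assms] by (simp add: card_image)
qed

lemma card_atMost_le_if_less_nth:
  fixes S :: "'a::linorder set"
  assumes "finite S" "k < card S" "v < sorted_list_of_set S ! k"
  shows "card {x\<in>S. x \<le> v} \<le> k"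
proof -
  have "{x\<in>S. x \<le> v} \<subseteq> {x\<in>S. x \<le> sorted_list_of_set S ! k}"
    using assms(3) by auto
  moreover have "sorted_list_of_set S ! k \<in> {x\<in>S. x \<le> sorted_list_of_set S ! k} - {x\<in>S. x \<le> v}"
    using assms(3) sorted_list_of_set_nth_in[OF assms(1,2)] by auto
  ultimately have "{x\<in>S. x \<le> v} \<subset> {x\<in>S. x \<le> sorted_list_of_set S ! k}"
    by blast
  then have "card {x\<in>S. x \<le> v} < card {x\<in>S. x \<le> sorted_list_of_set S ! k}"
    using assms(1) by (intro psubset_card_mono) auto
  then show ?thesis using card_atMost_sorted_list_of_set_nth[OF assms(1,2)] by simp
qed

lemma zeta_le: "zeta n lam j \<le> n"
proof -
  have "zeta n lam j \<le> card {1..n}"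
    unfolding zeta_def by (intro card_mono) auto
  then show ?thesis by simp
qed

lemma zeta_antimono: "j \<le> j' \<Longrightarrow> zeta n lam j' \<le> zeta n lam j"
  unfolding zeta_def by (intro card_mono) auto

definition key_col :: "nat \<Rightarrow> (nat \<Rightarrow> nat) \<Rightarrow> (nat \<Rightarrow> nat) \<Rightarrow> nat \<Rightarrow> nat set" where
  "key_col n lam \<pi> j = \<pi> ` {1..zeta n lam j}"

lemma finite_key_col [simp]: "finite (key_col n lam \<pi> j)"
  unfolding key_col_def by simp

lemma key_col_antimono: "j \<le> j' \<Longrightarrow> key_col n lam \<pi> j' \<subseteq> key_col n lam \<pi> j"
  unfolding key_col_def using zeta_antimono[of j j' n lam] by (intro image_mono) auto

lemma key_eq_nth: "key n lam \<pi> j i = sorted_list_of_set (key_col n lam \<pi> j) ! (i - 1)"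
  unfolding key_def key_col_def ..

context
  fixes n :: nat and lam :: "nat \<Rightarrow> nat" and \<pi> :: "nat \<Rightarrow> nat"
  assumes perm: "\<pi> permutes {1..n}"
begin

lemma card_key_col: "card (key_col n lam \<pi> j) = zeta n lam j"
proof -
  have "inj_on \<pi> {1..zeta n lam j}"
    using permutes_inj[OF perm] by (simp add: inj_on_def inj_def)
  then show ?thesis unfolding key_col_def by (simp add: card_image)
qed

lemma key_col_subset: "key_col n lam \<pi> j \<subseteq> {1..n}"
  using key_col_antimono[of 0 j n lam \<pi>] permutes_image[OF perm] zeta_le[of n lam 0]
  unfolding key_col_def by fastforce

lemma key_in_key_col: "1 \<le> i \<Longrightarrow> i \<le> zeta n lam j \<Longrightarrow> key n lam \<pi> j i \<in> key_col n lam \<pi> j"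
  unfolding key_eq_nth using sorted_list_of_set_nth_in[of "key_col n lam \<pi> j" "i - 1"] card_key_col[of j] by simp

lemma key_in_range: "1 \<le> i \<Longrightarrow> i \<le> zeta n lam j \<Longrightarrow> key n lam \<pi> j i \<in> {1..n}"
  using key_in_key_col key_col_subset by blast

lemma key_Suc_le:
  "x \<in> key_col n lam \<pi> l \<Longrightarrow> 1 \<le> k \<Longrightarrow> k < zeta n lam l \<Longrightarrow> key n lam \<pi> l k < x
   \<Longrightarrow> key n lam \<pi> l (Suc k) \<le> x"
  unfolding key_eq_nth
  using sorted_list_of_set_nth_Suc_le[of "key_col n lam \<pi> l" x "k - 1"] card_key_col[of l] by simp

lemma card_key_col_atMost_key:
  "1 \<le> k \<Longrightarrow> k \<le> zeta n lam l \<Longrightarrow> card {x \<in> key_col n lam \<pi> l. x \<le> key n lam \<pi> l k} = k"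
  unfolding key_eq_nth
  using card_atMost_sorted_list_of_set_nth[of "key_col n lam \<pi> l" "k - 1"] card_key_col[of l] by simp

lemma card_key_col_atMost_less_key:
  "1 \<le> i \<Longrightarrow> i \<le> zeta n lam j \<Longrightarrow> v < key n lam \<pi> j i \<Longrightarrow>
    card {x \<in> key_col n lam \<pi> j. x \<le> v} \<le> i - 1"
  unfolding key_eq_nth
  using card_atMost_le_if_less_nth[of "key_col n lam \<pi> j" "i - 1" v] card_key_col[of j] by simp

lemma le_key_zeta: "x \<in> key_col n lam \<pi> l \<Longrightarrow> x \<le> key n lam \<pi> l (zeta n lam l)"
  unfolding key_eq_nth
  using le_sorted_list_of_set_last[of "key_col n lam \<pi> l" x] card_key_col[of l] by (simp add: Suc_le_eq)

end

lemma ex_crossing_step: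
  fixes f :: "nat \<Rightarrow> 'a::linorder"
  assumes "f a < y" "y \<le> f b" "a < b"
  shows "\<exists>i. a \<le> i \<and> i < b \<and> f i < y \<and> y \<le> f (Suc i)"
  using assms
proof (induction b)
  case (Suc b)
  show ?case
  proof (cases "a < b \<and> y \<le> f b")
    case True
    then show ?thesis using Suc.IH Suc.prems(1) less_SucI by blast
  next
    case False
    then have "f b < y" using Suc.prems(1,3) by (auto simp: less_Suc_eq)
    then show ?thesis using Suc.prems by (intro exI[of _ b]) auto
  qed
qed simp

lemma finite_Rset: "finite (Rset n lam)"
proof -
  have "Rset n lam \<subseteq> zeta n lam ` {1..lam 1}" unfolding Rset_def by auto
  then show ?thesis using finite_subset by blast
qed

lemma R_312_containingI:
  assumes "A \<in> Rset n lam" "B \<in> Rset n lam" "1 \<le> a" "a \<le> A" "A < b" "b \<le> B" "B < c" "c \<le> n"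
    and "\<pi> b < \<pi> c" "\<pi> c < \<pi> a"
  shows "R_312_containing n lam \<pi>"
proof -
  let ?q = "sorted_list_of_set (Rset n lam)"
  obtain \<alpha> where \<alpha>: "\<alpha> < card (Rset n lam)" "A = ?q ! \<alpha>"
    using sorted_list_of_set_obtain_index[OF finite_Rset assms(1)] by blast
  obtain \<beta> where \<beta>: "\<beta> < card (Rset n lam)" "B = ?q ! \<beta>"
    using sorted_list_of_set_obtain_index[OF finite_Rset assms(2)] by blast
  have "\<alpha> < \<beta>"
    using sorted_list_of_set_nth_le_iff[OF finite_Rset \<beta>(1) \<alpha>(1)] \<alpha> \<beta> assms(5,6) by auto
  then obtain h where h: "\<alpha> \<le> h" "h < \<beta>" "?q ! h < b" "b \<le> ?q ! Suc h"
    using ex_crossing_step[of "(!) ?q" \<alpha> b \<beta>] \<alpha> \<beta> assms(5,6) by auto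
  have "Suc h < card (Rset n lam)" using h(2) \<beta>(1) by simp
  then have "A \<le> ?q ! h" "?q ! Suc h \<le> B"
    using sorted_list_of_set_nth_le_iff[OF finite_Rset] \<alpha> \<beta> h(1,2) by simp_all
  moreover have "qseq n lam (Suc h) = ?q ! h" "qseq n lam (Suc h + 1) = ?q ! Suc h"
    "Suc h \<le> rR n lam - 1"
    unfolding qseq_def rR_def using \<open>Suc h < card (Rset n lam)\<close> by auto
  ultimately show ?thesis
    unfolding R_312_containing_def using h(3,4) assms(3-10)
    by (intro exI[of _ "Suc h"] exI[of _ a] exI[of _ b] exI[of _ c]) simp
qed

text \<open>The pattern in values \<open>b < e < a\<close> comes from positions in the order
  \<open>\<pi>\<^sup>-\<^sup>1 a \<le> \<zeta>\<^sub>j < \<pi>\<^sup>-\<^sup>1 b \<le> \<zeta>\<^sub>l < \<pi>\<^sup>-\<^sup>1 e\<close>.\<close>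
lemma R_312_containing_if_key_col_pattern:
  assumes perm: "\<pi> permutes {1..n}" and "1 \<le> l" "l \<le> j" "j \<le> lam 1"
    and "a \<in> key_col n lam \<pi> j" "b \<in> key_col n lam \<pi> l - key_col n lam \<pi> j"
    and "e \<in> {1..n} - key_col n lam \<pi> l" "b < e" "e < a"
  shows "R_312_containing n lam \<pi>"
proof -
  obtain x where x: "x \<in> {1..zeta n lam j}" "a = \<pi> x"
    using assms(5) unfolding key_col_def by auto
  obtain y where y: "y \<in> {1..zeta n lam l}" "b = \<pi> y"
    using assms(6) unfolding key_col_def by auto
  have "zeta n lam j < y"
  proof (rule ccontr)
    assume "\<not> zeta n lam j < y"
    then have "b \<in> key_col n lam \<pi> j" using y unfolding key_col_def by auto
    then show False using assms(6) by simp
  qed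
  obtain z where z: "z \<in> {1..n}" "e = \<pi> z"
    using assms(7) permutes_image[OF perm] by (metis Diff_iff imageE)
  have "zeta n lam l < z"
  proof (rule ccontr)
    assume "\<not> zeta n lam l < z"
    then have "e \<in> key_col n lam \<pi> l" using z unfolding key_col_def by auto
    then show False using assms(7) by simp
  qed
  have "zeta n lam j \<in> Rset n lam" "zeta n lam l \<in> Rset n lam"
    unfolding Rset_def using assms(2-4) y z \<open>zeta n lam j < y\<close> \<open>zeta n lam l < z\<close> by auto
  then show ?thesis
    using R_312_containingI[of "zeta n lam j" n lam "zeta n lam l" x y z \<pi>] x y z assms(8,9)
      \<open>zeta n lam j < y\<close> \<open>zeta n lam l < z\<close> by auto
qed

text \<open>Column \<open>l\<close> of the key has \<open>k\<close> entries \<open>\<le> Y\<^sub>l(k)\<close>, column \<open>j\<close> fewer (since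
  \<open>Y\<^sub>j(i) > Y\<^sub>l(k)\<close> with \<open>i \<le> k\<close>); this supplies the \<open>b\<close> of the pattern above.\<close>
lemma R_312_containing_if_between_keys:
  assumes perm: "\<pi> permutes {1..n}" and "1 \<le> l" "l \<le> j" "j \<le> lam 1"
    and "1 \<le> i" "i \<le> k" "k < zeta n lam l" "i \<le> zeta n lam j"
    and "e \<in> {1..n}" "key n lam \<pi> l k < e" "e < key n lam \<pi> l (Suc k)" "e \<le> key n lam \<pi> j i"
  shows "R_312_containing n lam \<pi>"
proof -
  let ?C = "key_col n lam \<pi>" and ?v = "key n lam \<pi> l k"
  have "card {x \<in> ?C j. x \<le> ?v} < card {x \<in> ?C l. x \<le> ?v}"
    using card_key_col_atMost_less_key[OF perm assms(5,8), where v = ?v]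
      card_key_col_atMost_key[OF perm, where k = k and l = l and lam = lam] assms(5-7,10,12)
    by simp
  moreover have "card {x \<in> ?C l. x \<le> ?v} \<le> card {x \<in> ?C j. x \<le> ?v}"
    if "{x \<in> ?C l. x \<le> ?v} \<subseteq> {x \<in> ?C j. x \<le> ?v}"
    using that by (intro card_mono) simp_all
  ultimately obtain b where b: "b \<in> ?C l - ?C j" "b \<le> ?v"
    by force
  have e_notin: "e \<notin> ?C l"
    using key_Suc_le[OF perm, where x = e and l = l and k = k and lam = lam] assms(5-7,10,11)
    by auto
  then have "e \<noteq> key n lam \<pi> j i"
    using key_in_key_col[OF perm assms(5,8)] key_col_antimono[OF assms(3)] by blast
  with e_notin show ?thesis
    using R_312_containing_if_key_col_pattern[OF perm assms(2-4) key_in_key_col[OF perm assms(5,8)] b(1)]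
      assms(9-12) b(2) by simp
qed

lemma ewis_eq_ewis_from: "ewis xs = ewis_from 0 xs"
  by (cases xs) auto

lemma set_ewis_from_subset: "set (ewis_from v xs) \<subseteq> set xs"
  by (induction v xs rule: ewis_from.induct) auto

lemma set_ewis_subset: "set (ewis xs) \<subseteq> set xs"
  using set_ewis_from_subset ewis_eq_ewis_from by metis

text \<open>A skipped term lies below the current threshold, and the threshold never exceeds
  an upper bound of the sequence.\<close>
lemma ewis_from_skipped_less:
  assumes "y \<in> set xs" "y \<notin> set (ewis_from v xs)" "v \<le> B" "\<forall>z\<in>set xs. snd z \<le> B"
  shows "snd y < B"
  using assms
proof (induction xs arbitrary: v)
  case (Cons x xs)
  then show ?case by (cases "v \<le> snd x"; cases "y = x") auto
qed simp

lemma ewis_from_adjacent: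
  assumes "distinct (as @ x # y # bs)" "x \<in> set (ewis_from v (as @ x # y # bs))" "snd x \<le> snd y"
  shows "y \<in> set (ewis_from v (as @ x # y # bs))"
  using assms
proof (induction as arbitrary: v)
  case Nil
  then show ?case using set_ewis_from_subset[of _ bs] by (auto split: if_splits)
qed (auto split: if_splits)

lemma tableau_row_mono:
  "is_tableau n lam T \<Longrightarrow> is_box n lam j i \<Longrightarrow> is_box n lam (Suc j) i \<Longrightarrow> T j i \<le> T (Suc j) i"
  unfolding is_tableau_def by simp

lemma tableau_col_less:
  "is_tableau n lam T \<Longrightarrow> is_box n lam j (Suc i) \<Longrightarrow> 1 \<le> i \<Longrightarrow> T j i < T j (Suc i)"
  unfolding is_tableau_def is_box_def by simp

lemma tableau_col_mono:
  assumes "is_tableau n lam T" "is_box n lam j i'" "1 \<le> i" "i \<le> i'"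
  shows "T j i \<le> T j i'"
  using assms(4,2)
proof (induction i' rule: dec_induct)
  case (step m)
  then have "T j m < T j (Suc m)"
    using tableau_col_less[OF assms(1)] assms(3) by simp
  moreover have "is_box n lam j m" using step.prems step.hyps(1) assms(3) unfolding is_box_def by simp
  ultimately show ?case using step.IH by simp
qed simp

text \<open>The marked boxes after some rounds of scanning from column \<open>l\<close> are encoded by heights
  \<open>u\<close>: the unmarked boxes of each column \<open>j \<ge> l\<close> are exactly its top \<open>u j\<close> boxes.\<close>
definition below_heights :: "nat \<Rightarrow> (nat \<Rightarrow> nat) \<Rightarrow> nat \<Rightarrow> (nat \<Rightarrow> nat) \<Rightarrow> (nat \<times> nat) set" where
  "below_heights n lam l u = {(j, i). l \<le> j \<and> j \<le> lam 1 \<and> u j < i \<and> i \<le> zeta n lam j}"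

definition bottom_seq :: "nat \<Rightarrow> (nat \<Rightarrow> nat) \<Rightarrow> (nat \<Rightarrow> nat \<Rightarrow> nat) \<Rightarrow> nat \<Rightarrow> (nat \<Rightarrow> nat)
    \<Rightarrow> ((nat \<times> nat) \<times> nat) list" where
  "bottom_seq n lam T l u = map (\<lambda>j. ((j, u j), T j (u j))) (filter (\<lambda>j. 1 \<le> u j) [l..<lam 1 + 1])"

definition picked :: "nat \<Rightarrow> (nat \<Rightarrow> nat) \<Rightarrow> (nat \<Rightarrow> nat \<Rightarrow> nat) \<Rightarrow> nat \<Rightarrow> (nat \<Rightarrow> nat)
    \<Rightarrow> (nat \<times> nat) set" where
  "picked n lam T l u = fst ` set (ewis (bottom_seq n lam T l u))"

definition lower :: "nat \<Rightarrow> (nat \<Rightarrow> nat) \<Rightarrow> (nat \<Rightarrow> nat \<Rightarrow> nat) \<Rightarrow> nat \<Rightarrow> (nat \<Rightarrow> nat)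
    \<Rightarrow> nat \<Rightarrow> nat" where
  "lower n lam T l u j = (if (j, u j) \<in> picked n lam T l u then u j - 1 else u j)"

fun heights :: "nat \<Rightarrow> (nat \<Rightarrow> nat) \<Rightarrow> (nat \<Rightarrow> nat \<Rightarrow> nat) \<Rightarrow> nat \<Rightarrow> nat \<Rightarrow> nat \<Rightarrow> nat" where
  "heights n lam T l 0 = zeta n lam"
| "heights n lam T l (Suc t) = lower n lam T l (heights n lam T l t)"

lemma set_bottom_seq:
  "set (bottom_seq n lam T l u) = {((j, u j), T j (u j)) | j. l \<le> j \<and> j \<le> lam 1 \<and> 1 \<le> u j}"
  unfolding bottom_seq_def by auto

lemma distinct_bottom_seq: "distinct (bottom_seq n lam T l u)"
  unfolding bottom_seq_def by (auto simp: distinct_map inj_on_def)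

lemma picked_memD:
  assumes "(j, w) \<in> picked n lam T l u"
  shows "((j, w), T j w) \<in> set (ewis (bottom_seq n lam T l u)) \<and> w = u j \<and> l \<le> j \<and> j \<le> lam 1 \<and> 1 \<le> u j"
proof -
  obtain v where v: "((j, w), v) \<in> set (ewis (bottom_seq n lam T l u))"
    using assms unfolding picked_def by auto
  then have "((j, w), v) \<in> set (bottom_seq n lam T l u)"
    using set_ewis_subset by blast
  then have "w = u j \<and> v = T j w \<and> l \<le> j \<and> j \<le> lam 1 \<and> 1 \<le> u j"
    unfolding set_bottom_seq by auto
  then show ?thesis using v by auto
qed

lemma picked_iff:
  "(j, u j) \<in> picked n lam T l u \<longleftrightarrow> ((j, u j), T j (u j)) \<in> set (ewis (bottom_seq n lam T l u))"
  using picked_memD[of j "u j" n lam T l u] unfolding picked_def by force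

lemma lower_le: "lower n lam T l u j \<le> u j"
  unfolding lower_def by simp

lemma heights_le_zeta: "heights n lam T l t j \<le> zeta n lam j"
  by (induction t arbitrary: j) (auto intro: le_trans[OF lower_le])

lemma scan_step_below_heights:
  assumes "1 \<le> l" "\<And>j. u j \<le> zeta n lam j"
  shows "scan_step n lam T l (below_heights n lam l u) = picked n lam T l u"
proof -
  have unmarked: "{i. is_box n lam j i \<and> (j, i) \<notin> below_heights n lam l u} = {1..u j}"
    if "l \<le> j" "j \<le> lam 1" for j
    using that assms unfolding is_box_def below_heights_def by (auto intro: le_trans)
  have "has_unmarked n lam (below_heights n lam l u) j \<longleftrightarrow> 1 \<le> u j"
    if "l \<le> j" "j \<le> lam 1" for j
  proof -
    have "has_unmarked n lam (below_heights n lam l u) j \<longleftrightarrow>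
        {i. is_box n lam j i \<and> (j, i) \<notin> below_heights n lam l u} \<noteq> {}"
      unfolding has_unmarked_def by blast
    then show ?thesis unfolding unmarked[OF that] by simp
  qed
  then have filter_eq: "filter (has_unmarked n lam (below_heights n lam l u)) [l..<lam 1 + 1]
      = filter (\<lambda>j. 1 \<le> u j) [l..<lam 1 + 1]"
    by (intro filter_cong) auto
  have lowest: "lowest_unmarked n lam (below_heights n lam l u) j = u j"
    if "l \<le> j" "j \<le> lam 1" "1 \<le> u j" for j
    unfolding lowest_unmarked_def unmarked[OF that(1,2)] using that(3) by (intro Max_eqI) auto
  have "scan_seq n lam T l (below_heights n lam l u) = bottom_seq n lam T l u"
    unfolding scan_seq_def bottom_seq_def filter_eq
    by (intro map_cong refl) (auto simp: lowest simp del: upt_Suc)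
  then show ?thesis
    unfolding scan_step_def picked_def by simp
qed

lemma below_heights_lower:
  assumes "\<And>j. u j \<le> zeta n lam j"
  shows "below_heights n lam l u \<union> picked n lam T l u = below_heights n lam l (lower n lam T l u)"
proof -
  have "(j, i) \<in> below_heights n lam l (lower n lam T l u) \<longleftrightarrow>
      (j, i) \<in> below_heights n lam l u \<or> (j, i) \<in> picked n lam T l u" for j i
  proof (cases "(j, u j) \<in> picked n lam T l u")
    case True
    then have "l \<le> j" "j \<le> lam 1" "1 \<le> u j"
      using picked_memD by blast+
    moreover have "(j, i) \<in> picked n lam T l u \<longleftrightarrow> i = u j"
      using True picked_memD[of j i n lam T l u] by blast
    ultimately show ?thesis
      using True assms[of j] unfolding below_heights_def lower_def by auto
  next
    case False
    then have "(j, i) \<notin> picked n lam T l u"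
      using picked_memD[of j i n lam T l u] by blast
    then show ?thesis
      using False unfolding below_heights_def lower_def by auto
  qed
  then show ?thesis by auto
qed

lemma marked_eq_below_heights:
  "1 \<le> l \<Longrightarrow> marked n lam T l t = below_heights n lam l (heights n lam T l t)"
proof (induction t)
  case 0
  then show ?case unfolding below_heights_def by auto
next
  case (Suc t)
  then show ?case
    using scan_step_below_heights below_heights_lower heights_le_zeta by simp
qed

lemma lower_first:
  assumes "l \<le> lam 1"
  shows "lower n lam T l u l = u l - 1"
proof (cases "1 \<le> u l")
  case True
  have "[l..<lam 1 + 1] = l # [Suc l..<lam 1 + 1]"
    using assms upt_conv_Cons by simp
  then have "hd (bottom_seq n lam T l u) = ((l, u l), T l (u l))" "bottom_seq n lam T l u \<noteq> []"
    unfolding bottom_seq_def using True by simp_all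
  then have "((l, u l), T l (u l)) \<in> set (ewis (bottom_seq n lam T l u))"
    by (metis ewis.simps(2) list.collapse list.set_intros(1))
  then show ?thesis unfolding lower_def picked_iff by simp
qed (simp add: lower_def)

lemma lower_ge: "u j - 1 \<le> lower n lam T l u j"
  unfolding lower_def by simp

text \<open>Two neighbouring columns of equal height have weakly increasing bottom entries, so the
  earliest weakly increasing subsequence cannot pick the left one and skip the right one.\<close>
lemma lower_Suc_le:
  assumes tab: "is_tableau n lam T" and "1 \<le> l" "\<And>j. u j \<le> zeta n lam j"
    and j: "l \<le> j" "j < lam 1" and "u (Suc j) \<le> u j"
  shows "lower n lam T l u (Suc j) \<le> lower n lam T l u j"
proof -
  let ?f = "\<lambda>j. ((j, u j), T j (u j))" and ?P = "\<lambda>j. 1 \<le> u j"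
  consider "u (Suc j) < u j" | "(j, u j) \<notin> picked n lam T l u"
    | "u (Suc j) = u j" "(j, u j) \<in> picked n lam T l u"
    using assms(6) by linarith
  then show ?thesis
  proof cases
    case 1
    then show ?thesis using lower_le[of n lam T l u "Suc j"] lower_ge[of u j n lam T l] by linarith
  next
    case 2
    then show ?thesis using lower_le[of n lam T l u "Suc j"] assms(6) by (simp add: lower_def)
  next
    case 3
    then have "?P j" "?P (Suc j)" using picked_memD by simp_all
    have "[l..<lam 1 + 1] = [l..<j] @ j # Suc j # [Suc (Suc j)..<lam 1 + 1]"
      using j upt_add_eq_append[of l j "lam 1 + 1 - j"] upt_conv_Cons by simp
    then have seq: "bottom_seq n lam T l u
        = map ?f (filter ?P [l..<j]) @ ?f j # ?f (Suc j) # map ?f (filter ?P [Suc (Suc j)..<lam 1 + 1])"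
      unfolding bottom_seq_def using \<open>?P j\<close> \<open>?P (Suc j)\<close> by simp
    have "is_box n lam j (u j)" "is_box n lam (Suc j) (u j)"
      unfolding is_box_def using assms(2) assms(3)[of j] assms(3)[of "Suc j"] j 3(1) \<open>?P j\<close>
      by auto
    then have "snd (?f j) \<le> snd (?f (Suc j))"
      using tableau_row_mono[OF tab] 3(1) by simp
    then have "?f (Suc j) \<in> set (ewis (bottom_seq n lam T l u))"
      using ewis_from_adjacent[of "map ?f (filter ?P [l..<j])" "?f j" "?f (Suc j)"]
        distinct_bottom_seq[of n lam T l u] 3(2)
      unfolding picked_iff ewis_eq_ewis_from seq by simp
    then show ?thesis
      using 3 unfolding lower_def picked_iff by simp
  qed
qed

lemma heights_first: "l \<le> lam 1 \<Longrightarrow> heights n lam T l t l = zeta n lam l - t"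
  by (induction t) (simp_all add: lower_first)

lemma heights_Suc_le:
  assumes "is_tableau n lam T" "1 \<le> l" "l \<le> j" "j < lam 1"
  shows "heights n lam T l t (Suc j) \<le> heights n lam T l t j"
proof (induction t)
  case 0
  then show ?case using zeta_antimono[of j "Suc j"] by simp
next
  case (Suc t)
  then show ?case using lower_Suc_le[OF assms(1,2) heights_le_zeta assms(3,4)] by simp
qed

lemma heights_le_first:
  assumes "is_tableau n lam T" "1 \<le> l" "l \<le> j" "j \<le> lam 1"
  shows "heights n lam T l t j \<le> zeta n lam l - t"
  using assms(3,4)
proof (induction j rule: dec_induct)
  case base
  then show ?case using heights_first by simp
next
  case (step m)
  then show ?case using heights_Suc_le[OF assms(1,2), of m t] by simp
qed

text \<open>One round of scanning turns a weak upper bound on the unmarked entries into a strict one: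
  a newly exposed entry lies above a picked one, and an entry that stays exposed was skipped.\<close>
lemma lower_entries_less:
  assumes tab: "is_tableau n lam T" and "1 \<le> l" and u_le: "\<And>j. u j \<le> zeta n lam j"
    and bound: "\<And>j i. l \<le> j \<Longrightarrow> j \<le> lam 1 \<Longrightarrow> 1 \<le> i \<Longrightarrow> i \<le> u j \<Longrightarrow> T j i \<le> B"
    and j: "l \<le> j" "j \<le> lam 1" and i: "1 \<le> i" "i \<le> lower n lam T l u j"
  shows "T j i < B"
proof -
  let ?u' = "lower n lam T l u j"
  have "is_box n lam j ?u'"
    unfolding is_box_def using assms(2) j i lower_le[of n lam T l u j] u_le[of j] by linarith
  then have "T j i \<le> T j ?u'"
    using tableau_col_mono[OF tab _ i] by simp
  moreover have "T j ?u' < B"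
  proof (cases "(j, u j) \<in> picked n lam T l u")
    case True
    then have "u j = Suc ?u'" using i unfolding lower_def by simp
    then have "T j ?u' < T j (u j)"
      using tableau_col_less[OF tab] j i assms(2) u_le[of j] unfolding is_box_def by simp
    also have "T j (u j) \<le> B"
      using bound j i \<open>u j = Suc ?u'\<close> by simp
    finally show ?thesis .
  next
    case False
    then have "?u' = u j" unfolding lower_def by simp
    have "((j, u j), T j (u j)) \<in> set (bottom_seq n lam T l u)"
      unfolding set_bottom_seq using j i \<open>?u' = u j\<close> by auto
    moreover have "\<forall>z \<in> set (bottom_seq n lam T l u). snd z \<le> B"
      unfolding set_bottom_seq using bound by auto
    moreover have "((j, u j), T j (u j)) \<notin> set (ewis_from 0 (bottom_seq n lam T l u))"
      using False unfolding picked_iff ewis_eq_ewis_from .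
    ultimately show ?thesis
      using ewis_from_skipped_less[of _ _ 0 B] \<open>?u' = u j\<close> by fastforce
  qed
  ultimately show ?thesis by simp
qed

lemma heights_entries_le_key:
  assumes perm: "\<pi> permutes {1..n}" and tab: "is_tableau n lam T"
    and tle: "tab_le n lam T (key n lam \<pi>)" and no312: "\<not> R_312_containing n lam \<pi>"
    and l: "1 \<le> l" "l \<le> lam 1"
  shows "t < zeta n lam l \<Longrightarrow> l \<le> j \<Longrightarrow> j \<le> lam 1 \<Longrightarrow> 1 \<le> i \<Longrightarrow> i \<le> heights n lam T l t j
    \<Longrightarrow> T j i \<le> key n lam \<pi> l (zeta n lam l - t)"
proof (induction t arbitrary: j i)
  case 0
  then have "is_box n lam j i" unfolding is_box_def using l by simp
  then have "T j i \<le> key n lam \<pi> j i"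
    using tle unfolding tab_le_def by blast
  also have "\<dots> \<le> key n lam \<pi> l (zeta n lam l)"
    using le_key_zeta[OF perm] key_in_key_col[OF perm] key_col_antimono[of l j n lam \<pi>] 0
    by (metis heights.simps(1) subsetD)
  finally show ?case by simp
next
  case (Suc t)
  define k where "k = zeta n lam l - Suc t"
  have "zeta n lam l - t = Suc k" using Suc.prems(1) k_def by simp
  have "i \<le> k"
    using heights_le_first[OF tab l(1) Suc.prems(2,3)] Suc.prems(5) k_def by (meson le_trans)
  have box: "is_box n lam j i"
    unfolding is_box_def using l Suc.prems heights_le_zeta by (meson le_trans)
  have "T j i < key n lam \<pi> l (Suc k)"
    using lower_entries_less[OF tab l(1), where u = "heights n lam T l t"
        and B = "key n lam \<pi> l (Suc k)", OF heights_le_zeta _ Suc.prems(2-4)]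
      Suc.IH Suc.prems(1,5) \<open>zeta n lam l - t = Suc k\<close> by simp
  moreover have "T j i \<in> {1..n}" "T j i \<le> key n lam \<pi> j i"
    using tab tle box unfolding is_tableau_def tab_le_def by blast+
  moreover have "k < zeta n lam l" "i \<le> zeta n lam j"
    using k_def Suc.prems(1) box unfolding is_box_def by auto
  ultimately show ?case
    using R_312_containing_if_between_keys[where lam = lam, OF perm l(1) Suc.prems(2-4) \<open>i \<le> k\<close>]
      no312 k_def by fastforce
qed

lemma marked_eq_Union: "marked n lam T l t = (\<Union>t'<t. scan_step n lam T l (marked n lam T l t'))"
  by (induction t) (auto simp: lessThan_Suc)

lemma Union_scanning_paths:
  assumes "k \<le> zeta n lam l"
  shows "(\<Union>k' \<in> {k + 1 .. zeta n lam l}. scanning_path n lam T l k') = marked n lam T l (zeta n lam l - k)"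
proof -
  have "(\<lambda>k'. zeta n lam l - k') ` {k + 1 .. zeta n lam l} = {..<zeta n lam l - k}"
  proof (intro set_eqI iffI)
    fix t assume "t \<in> {..<zeta n lam l - k}"
    then show "t \<in> (\<lambda>k'. zeta n lam l - k') ` {k + 1 .. zeta n lam l}"
      by (intro image_eqI[of _ _ "zeta n lam l - t"]) auto
  qed auto
  then show ?thesis
    unfolding scanning_path_def marked_eq_Union[of n lam T l "zeta n lam l - k"]
    by (metis image_image)
qed

lemma U_set_memD:
  assumes "1 \<le> l" "k \<le> zeta n lam l" "x \<in> U_set n lam T l k"
  obtains j i where "x = T j i" "l \<le> j" "j \<le> lam 1" "1 \<le> i"
    "i \<le> heights n lam T l (zeta n lam l - k) j"
proof -
  obtain j i where ji: "x = T j i" "is_box n lam j i" "l + 1 \<le> j"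
    "(j, i) \<notin> marked n lam T l (zeta n lam l - k)"
    using assms(3) unfolding U_set_def Union_scanning_paths[OF assms(2)] by blast
  then have "i \<le> heights n lam T l (zeta n lam l - k) j"
    unfolding marked_eq_below_heights[OF assms(1)] below_heights_def is_box_def by auto
  with ji show thesis
    using that unfolding is_box_def by simp
qed

lemma finite_U_set: "finite (U_set n lam T l k)"
proof -
  have "U_set n lam T l k \<subseteq> (\<lambda>(j, i). T j i) ` ({1..lam 1} \<times> {1..n})"
    unfolding U_set_def is_box_def using zeta_le[of n lam] by (force intro: order_trans)
  then show ?thesis using finite_subset by blast
qed

lemma mU_le: "(\<And>x. x \<in> U_set n lam T l k \<Longrightarrow> x \<le> B) \<Longrightarrow> 1 \<le> B \<Longrightarrow> mU n lam T l k \<le> B"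
  unfolding mU_def using finite_U_set by auto

theorem proposition6p2:
  fixes n :: nat and lam :: "nat \<Rightarrow> nat" and \<pi> :: "nat \<Rightarrow> nat" and T :: "nat \<Rightarrow> nat \<Rightarrow> nat"
  assumes "1 \<le> n"
    and "is_partition n lam"
    and "is_R_perm n lam \<pi>"
    and "is_tableau n lam T"
    and "tab_le n lam T (key n lam \<pi>)"
    and "\<exists>l k. is_box n lam l k \<and> key n lam \<pi> l k < mU n lam T l k"
  shows "R_312_containing n lam \<pi>"
proof (rule ccontr)
  assume no312: "\<not> R_312_containing n lam \<pi>"
  have perm: "\<pi> permutes {1..n}" using assms(3) unfolding is_R_perm_def by simp
  obtain l k where box: "is_box n lam l k" and less: "key n lam \<pi> l k < mU n lam T l k"
    using assms(6) by blast
  then have l: "1 \<le> l" "l \<le> lam 1" and k: "1 \<le> k" "k \<le> zeta n lam l"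
    unfolding is_box_def by auto
  have "x \<le> key n lam \<pi> l k" if x: "x \<in> U_set n lam T l k" for x
  proof -
    obtain j i where "x = T j i" "l \<le> j" "j \<le> lam 1" "1 \<le> i" "i \<le> heights n lam T l (zeta n lam l - k) j"
      using U_set_memD[OF l(1) k(2) x] by blast
    then show ?thesis
      using heights_entries_le_key[OF perm assms(4,5) no312 l, of "zeta n lam l - k" j i] k by simp
  qed
  then have "mU n lam T l k \<le> key n lam \<pi> l k"
    using mU_le key_in_range[OF perm k] by simp
  with less show False by simp
qed

end
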